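(* Let $\Gamma=(G,\varphi)$ be a colored graph and let $n\ge 1$. Then the cube complex $C_n(\Gamma)$ satisfies Gromov's link condition: for every cell $\rho$ of $C_n(\Gamma)$, every triangle (3-cycle of vertices pairwise joined by edges) in the link of $\rho$ bounds a 2-simplex in the link of $\rho$. Consequently, $C_n(\Gamma)$, metrized with each cube a unit Euclidean cube, is non-positively curved, i.e. the universal cover of each connected component is CAT(0).
   Context: A graph $G$ is a locally finite 1-dimensional CW complex; its cells are vertices and edges. For a cell $\sigma$ of $G$, let $\partial\sigma$ denote the set of endpoints of $\sigma$ if $\sigma$ is an edge, and $\partial\sigma=\{\sigma\}$ if $\sigma$ is a vertex. $G^n$ carries the product cell structure with cells $\sigma_1\times\cdots\times\sigma_n$. A colored graph $\Gamma=(G,\varphi)$ is a graph with a function $\varphi$ from its vertex set to a set of colors. The configuration space $C_n(\Gamma)$ is the subcomplex of $G^n$ which is the union of those product cells $\sigma_1\times\cdots\times\sigma_n$ with $\varphi(\partial\sigma_i)\cap\varphi(\partial\sigma_j)=\emptyset$ for all $i\ne j$; it is a cube complex. *)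

theory Defs
  imports Main
begin

text \<open>A graph (locally finite 1-dimensional CW complex) is given by a vertex set V,
an edge set E and, for each edge, the two endpoints of its characteristic map
[0,1] -> G: src e (image of 0) and tgt e (image of 1).  Loops (src e = tgt e)
and multiple edges are allowed.\<close>

definition graph :: "'v set \<Rightarrow> 'e set \<Rightarrow> ('e \<Rightarrow> 'v) \<Rightarrow> ('e \<Rightarrow> 'v) \<Rightarrow> bool" where
  "graph V E src tgt \<longleftrightarrow> (\<forall>e\<in>E. src e \<in> V \<and> tgt e \<in> V)"

definition locally_finite :: "'v set \<Rightarrow> 'e set \<Rightarrow> ('e \<Rightarrow> 'v) \<Rightarrow> ('e \<Rightarrow> 'v) \<Rightarrow> bool" where
  "locally_finite V E src tgt \<longleftrightarrow> (\<forall>v\<in>V. finite {e\<in>E. src e = v \<or> tgt e = v})"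

datatype ('v, 'e) cell = Vx 'v | Ed 'e

definition is_cell :: "'v set \<Rightarrow> 'e set \<Rightarrow> ('v, 'e) cell \<Rightarrow> bool" where
  "is_cell V E c = (case c of Vx v \<Rightarrow> v \<in> V | Ed e \<Rightarrow> e \<in> E)"

definition bdry :: "('e \<Rightarrow> 'v) \<Rightarrow> ('e \<Rightarrow> 'v) \<Rightarrow> ('v, 'e) cell \<Rightarrow> 'v set" where
  "bdry src tgt c = (case c of Vx v \<Rightarrow> {v} | Ed e \<Rightarrow> {src e, tgt e})"

text \<open>Cells of C_n(\<Gamma>): product cells \<sigma>_1 x ... x \<sigma>_n (lists of length n) with
 \<phi>(\<partial>\<sigma>_i) \<inter> \<phi>(\<partial>\<sigma>_j) = {} for i \<noteq> j.\<close>
definition conf_cell :: "'v set \<Rightarrow> 'e set \<Rightarrow> ('e \<Rightarrow> 'v) \<Rightarrow> ('e \<Rightarrow> 'v) \<Rightarrow> ('v \<Rightarrow> 'c) \<Rightarrow> nat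
    \<Rightarrow> ('v, 'e) cell list \<Rightarrow> bool" where
  "conf_cell V E src tgt \<phi> n \<sigma> \<longleftrightarrow> length \<sigma> = n \<and> (\<forall>i<n. is_cell V E (\<sigma> ! i)) \<and>
     (\<forall>i<n. \<forall>j<n. i \<noteq> j \<longrightarrow> \<phi> ` bdry src tgt (\<sigma> ! i) \<inter> \<phi> ` bdry src tgt (\<sigma> ! j) = {})"

definition endpt :: "('e \<Rightarrow> 'v) \<Rightarrow> ('e \<Rightarrow> 'v) \<Rightarrow> 'e \<Rightarrow> bool \<Rightarrow> 'v" where
  "endpt src tgt e s = (if s then tgt e else src e)"

text \<open>A cube c of C_n containing \<rho>
as a face is given, together with the face inclusion, by a set D of "directions"
(i, e, s): in coordinate i the vertex \<rho>_i is replaced by an edge e, \<rho>_i being the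
endpoint s of e (s = False: image of 0, s = True: image of 1).  The simplices of
lk(\<rho>) are exactly the nonempty finite such sets D for which the corresponding
product cell is a cell of C_n(\<Gamma>); the dimension of the simplex is |D| - 1 and
the vertices of lk(\<rho>) are the singleton simplices.\<close>
definition link_simplex :: "'v set \<Rightarrow> 'e set \<Rightarrow> ('e \<Rightarrow> 'v) \<Rightarrow> ('e \<Rightarrow> 'v) \<Rightarrow> ('v \<Rightarrow> 'c) \<Rightarrow> nat
    \<Rightarrow> ('v, 'e) cell list \<Rightarrow> (nat \<times> 'e \<times> bool) set \<Rightarrow> bool" where
  "link_simplex V E src tgt \<phi> n \<rho> D \<longleftrightarrow>
     finite D \<and> D \<noteq> {} \<and>
     (\<forall>(i, e, s)\<in>D. i < n \<and> e \<in> E \<and> \<rho> ! i = Vx (endpt src tgt e s)) \<and>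
     (\<forall>(i, e, s)\<in>D. \<forall>(j, e', s')\<in>D. i = j \<longrightarrow> (e, s) = (e', s')) \<and>
     (\<exists>c. conf_cell V E src tgt \<phi> n c \<and>
        (\<forall>i<n. (\<exists>e s. (i, e, s) \<in> D \<and> c ! i = Ed e) \<or>
               ((\<forall>e s. (i, e, s) \<notin> D) \<and> c ! i = \<rho> ! i)))"

end

theory Submission
  imports Defs
begin

text \<open>The condition defining a cell of \<open>C\<^sub>n(\<Gamma>)\<close> constrains the coordinates one
and two at a time.  Hence a set D of directions at \<open>\<rho>\<close>, in pairwise distinct coordinates,
spans a cube of \<open>C\<^sub>n(\<Gamma>)\<close> as soon as every two of its directions do: at any two
coordinates that cube agrees with the cube spanned by a pair of directions of D covering
those coordinates.  So the link of every cell is a flag complex.\<close>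

definition cube_in_directions :: "nat \<Rightarrow> ('v, 'e) cell list \<Rightarrow> (nat \<times> 'e \<times> bool) set
    \<Rightarrow> ('v, 'e) cell list \<Rightarrow> bool" where
  "cube_in_directions n \<rho> D c \<longleftrightarrow>
     (\<forall>i<n. (\<exists>e s. (i, e, s) \<in> D \<and> c ! i = Ed e) \<or> ((\<forall>e s. (i, e, s) \<notin> D) \<and> c ! i = \<rho> ! i))"

lemma inj_on_fst_iff: "inj_on fst D \<longleftrightarrow> (\<forall>(i, e, s)\<in>D. \<forall>(j, e', s')\<in>D. i = j \<longrightarrow> (e, s) = (e', s'))"
  unfolding inj_on_def by fastforce

lemma link_simplex_iff:
  "link_simplex V E src tgt \<phi> n \<rho> D \<longleftrightarrow>
     finite D \<and> D \<noteq> {} \<and> (\<forall>(i, e, s)\<in>D. i < n \<and> e \<in> E \<and> \<rho> ! i = Vx (endpt src tgt e s)) \<and>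
     inj_on fst D \<and> (\<exists>c. conf_cell V E src tgt \<phi> n c \<and> cube_in_directions n \<rho> D c)"
  unfolding link_simplex_def cube_in_directions_def inj_on_fst_iff by (rule refl)

lemma cube_in_directions_nth_direction:
  assumes "cube_in_directions n \<rho> D c" "inj_on fst D" "(i, e, s) \<in> D" "i < n"
  shows "c ! i = Ed e"
proof -
  obtain e' s' where "(i, e', s') \<in> D" "c ! i = Ed e'"
    using assms(1,3,4) unfolding cube_in_directions_def by blast
  with assms(2,3) show ?thesis
    unfolding inj_on_fst_iff by fast
qed

lemma cube_in_directions_nth_fixed:
  assumes "cube_in_directions n \<rho> D c" "i \<notin> fst ` D" "i < n"
  shows "c ! i = \<rho> ! i"
  using assms unfolding cube_in_directions_def by force

lemma cube_in_directions_subset_nth: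
  assumes "cube_in_directions n \<rho> D c" "cube_in_directions n \<rho> D' c'"
    and "D' \<subseteq> D" "inj_on fst D" "i < n" "i \<in> fst ` D \<Longrightarrow> i \<in> fst ` D'"
  shows "c ! i = c' ! i"
proof (cases "i \<in> fst ` D")
  case True
  then obtain e s where d: "(i, e, s) \<in> D'"
    using assms(6) by force
  have "inj_on fst D'"
    using assms(4,3) by (rule inj_on_subset)
  with assms(2) have "c' ! i = Ed e"
    using d assms(5) by (rule cube_in_directions_nth_direction)
  moreover from d assms(3) have "(i, e, s) \<in> D" ..
  with assms(1,4) have "c ! i = Ed e"
    using assms(5) by (rule cube_in_directions_nth_direction)
  ultimately show ?thesis by simp
next
  case False
  then have "i \<notin> fst ` D'"
    using assms(3) by blast
  with False show ?thesis
    using assms(1,2,5) cube_in_directions_nth_fixed by metis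
qed

lemma ex_cube_in_directions: "\<exists>c. length c = n \<and> cube_in_directions n \<rho> D c"
proof -
  define dir where "dir i = (SOME d. d \<in> D \<and> fst d = i)" for i
  define c where "c = map (\<lambda>i. if i \<in> fst ` D then Ed (fst (snd (dir i))) else \<rho> ! i) [0..<n]"
  have "cube_in_directions n \<rho> D c"
    unfolding cube_in_directions_def
  proof (intro allI impI)
    fix i assume "i < n"
    show "(\<exists>e s. (i, e, s) \<in> D \<and> c ! i = Ed e) \<or> ((\<forall>e s. (i, e, s) \<notin> D) \<and> c ! i = \<rho> ! i)"
    proof (cases "i \<in> fst ` D")
      case True
      then obtain d where "d \<in> D" "fst d = i" by blast
      have "dir i \<in> D \<and> fst (dir i) = i"
        unfolding dir_def by (rule someI[of _ d]) (simp add: \<open>d \<in> D\<close> \<open>fst d = i\<close>)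
      moreover have "c ! i = Ed (fst (snd (dir i)))"
        using True \<open>i < n\<close> unfolding c_def by simp
      ultimately show ?thesis
        by (metis prod.collapse)
    next
      case False
      with \<open>i < n\<close> show ?thesis
        unfolding c_def by force
    qed
  qed
  moreover have "length c = n"
    unfolding c_def by simp
  ultimately show ?thesis
    by blast
qed

lemma conf_cell_if_pairwise:
  assumes "length c = n"
    and "\<And>i j. i < n \<Longrightarrow> j < n \<Longrightarrow>
           \<exists>c'. conf_cell V E src tgt \<phi> n c' \<and> c' ! i = c ! i \<and> c' ! j = c ! j"
  shows "conf_cell V E src tgt \<phi> n c"
  unfolding conf_cell_def
proof (intro conjI allI impI)
  fix i assume "i < n"
  then obtain c' where "conf_cell V E src tgt \<phi> n c'" "c' ! i = c ! i"
    using assms(2) by blast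
  with \<open>i < n\<close> show "is_cell V E (c ! i)"
    unfolding conf_cell_def by auto
next
  fix i j assume "i < n" "j < n" "i \<noteq> j"
  moreover obtain c' where "conf_cell V E src tgt \<phi> n c'" "c' ! i = c ! i" "c' ! j = c ! j"
    using assms(2) \<open>i < n\<close> \<open>j < n\<close> by blast
  ultimately have "\<phi> ` bdry src tgt (c' ! i) \<inter> \<phi> ` bdry src tgt (c' ! j) = {}"
    unfolding conf_cell_def by blast
  with \<open>c' ! i = c ! i\<close> \<open>c' ! j = c ! j\<close>
  show "\<phi> ` bdry src tgt (c ! i) \<inter> \<phi> ` bdry src tgt (c ! j) = {}"
    by simp
qed (fact assms(1))

lemma ex_pair_covering:
  assumes "x \<in> A" "y \<in> A" "x \<noteq> y"
  shows "\<exists>a\<in>A. \<exists>b\<in>A. a \<noteq> b \<and> {i, j} \<inter> f ` A \<subseteq> {f a, f b}"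
proof -
  consider (two) a b where "a \<in> A" "b \<in> A" "f a = i" "f b = j" "i \<noteq> j"
    | (one) a where "a \<in> A" "{i, j} \<inter> f ` A \<subseteq> {f a}"
    | (none) "{i, j} \<inter> f ` A = {}"
    by blast
  then show ?thesis
  proof cases
    case two
    then have "a \<noteq> b" by blast
    with two show ?thesis by blast
  next
    case one
    moreover obtain b where "b \<in> A" "b \<noteq> a"
      using assms by metis
    ultimately show ?thesis by blast
  next
    case none
    with assms show ?thesis by blast
  qed
qed

lemma link_simplex_flag:
  assumes "finite D" "d \<in> D" "d' \<in> D" "d \<noteq> d'"
    and edges: "\<And>a b. a \<in> D \<Longrightarrow> b \<in> D \<Longrightarrow> a \<noteq> b \<Longrightarrow> link_simplex V E src tgt \<phi> n \<rho> {a, b}"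
  shows "link_simplex V E src tgt \<phi> n \<rho> D"
proof -
  have directions: "i < n \<and> e \<in> E \<and> \<rho> ! i = Vx (endpt src tgt e s)" if "(i, e, s) \<in> D" for i e s
  proof -
    obtain b where "b \<in> D" "(i, e, s) \<noteq> b"
      using assms(2-4) by metis
    with that have "link_simplex V E src tgt \<phi> n \<rho> {(i, e, s), b}"
      by (rule edges)
    then show ?thesis
      using that by (auto simp: link_simplex_iff)
  qed
  have "inj_on fst D"
  proof (rule inj_onI)
    fix a b assume "a \<in> D" "b \<in> D" "fst a = fst b"
    show "a = b"
    proof (rule ccontr)
      assume "a \<noteq> b"
      then have "inj_on fst {a, b}"
        using edges[OF \<open>a \<in> D\<close> \<open>b \<in> D\<close>] by (simp add: link_simplex_iff)
      with \<open>fst a = fst b\<close> \<open>a \<noteq> b\<close> show False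
        by (simp add: inj_on_def)
    qed
  qed
  obtain c where "length c = n" and c: "cube_in_directions n \<rho> D c"
    using ex_cube_in_directions by blast
  have "conf_cell V E src tgt \<phi> n c"
    using \<open>length c = n\<close>
  proof (rule conf_cell_if_pairwise)
    fix i j assume "i < n" "j < n"
    obtain a b where ab: "a \<in> D" "b \<in> D" "a \<noteq> b" "{i, j} \<inter> fst ` D \<subseteq> {fst a, fst b}"
      using ex_pair_covering[OF assms(2-4), of i j fst] by blast
    from ab(1-3) have "link_simplex V E src tgt \<phi> n \<rho> {a, b}"
      by (rule edges)
    then obtain c' where c': "conf_cell V E src tgt \<phi> n c'" "cube_in_directions n \<rho> {a, b} c'"
      by (auto simp: link_simplex_iff)
    have "c ! k = c' ! k" if "k \<in> {i, j}" "k < n" for k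
    proof (rule cube_in_directions_subset_nth[OF c c'(2)])
      show "{a, b} \<subseteq> D"
        using ab(1,2) by blast
      show "k \<in> fst ` D \<Longrightarrow> k \<in> fst ` {a, b}"
        using ab(4) that(1) by blast
    qed fact+
    with c'(1) \<open>i < n\<close> \<open>j < n\<close>
    show "\<exists>c'. conf_cell V E src tgt \<phi> n c' \<and> c' ! i = c ! i \<and> c' ! j = c ! j"
      by auto
  qed
  with assms(1,2) directions \<open>inj_on fst D\<close> c show ?thesis
    unfolding link_simplex_iff by (intro conjI exI) auto
qed

theorem theorem3p3:
  fixes V :: "'v set" and E :: "'e set" and src tgt :: "'e \<Rightarrow> 'v"
    and \<phi> :: "'v \<Rightarrow> 'c" and n :: nat and \<rho> :: "('v, 'e) cell list"
    and d1 d2 d3 :: "nat \<times> 'e \<times> bool"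
  assumes "graph V E src tgt" and "locally_finite V E src tgt"
    and "n \<ge> 1"
    and "conf_cell V E src tgt \<phi> n \<rho>"
    and "d1 \<noteq> d2" and "d1 \<noteq> d3" and "d2 \<noteq> d3"
    and "link_simplex V E src tgt \<phi> n \<rho> {d1, d2}"
    and "link_simplex V E src tgt \<phi> n \<rho> {d1, d3}"
    and "link_simplex V E src tgt \<phi> n \<rho> {d2, d3}"
  shows "link_simplex V E src tgt \<phi> n \<rho> {d1, d2, d3}"
proof (rule link_simplex_flag)
  show "d1 \<in> {d1, d2, d3}" "d2 \<in> {d1, d2, d3}" "d1 \<noteq> d2"
    using assms(5) by simp_all
  fix a b assume "a \<in> {d1, d2, d3}" "b \<in> {d1, d2, d3}" "a \<noteq> b"
  then show "link_simplex V E src tgt \<phi> n \<rho> {a, b}"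
    using assms(8-10) by (auto simp: insert_commute)
qed simp

end
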